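(* Let $n\ge1$, $K\in\mathcal S_n$, $x\in\partial K$ and $u\in N_K(x)$. Then for $y=x-u$ we have $K\subseteq B(x-u,1)$, i.e. $y\in\partial K^c$. Moreover $-u\in N_{K^c}(y)$.
   Context: $B(x,r)$ is the closed Euclidean ball. For $A\subseteq\mathbb R^n$, $A^c=\bigcap_{x\in A}B(x,1)$ (with $\emptyset^c=\mathbb R^n$). $\mathcal S_n$ is the class of all sets of the form $\bigcap_{x\in A}B(x,1)$, $A\subseteq\mathbb R^n$. For a convex body $T$ and $z\in\partial T$, $N_T(z)$ denotes the set of unit outer normals of $T$ at $z$ (the outer normal cone at $z$ intersected with the unit sphere). *)

theory Defs
  imports "HOL-Analysis.Analysis"
begin

text \<open>The ball-polar (spindle convex hull style) operation:
  A^c = intersection of the closed unit balls centred at points of A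
  (the empty intersection is UNIV).\<close>
definition bcomp :: "'a::euclidean_space set \<Rightarrow> 'a set" where
  "bcomp A = (\<Inter>x\<in>A. cball x 1)"

definition S_class :: "'a::euclidean_space set set" where
  "S_class = {K. \<exists>A. K = bcomp A}"

definition unit_normals :: "'a::euclidean_space set \<Rightarrow> 'a \<Rightarrow> 'a set" where
  "unit_normals T z = {u. norm u = 1 \<and> (\<forall>w\<in>T. inner u (w - z) \<le> 0)}"

end

theory Submission
  imports Defs
begin

text \<open>Every \<open>K \<in> S\<^sub>n\<close> satisfies \<open>K = K\<^sup>c\<^sup>c\<close>, so it contains the spindle \<open>{x, w}\<^sup>c\<^sup>c\<close>
  of any two of its points. If some \<open>w \<in> K\<close> lay outside \<open>B(x - u, 1)\<close>, a short step from \<open>x\<close>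
  along \<open>w - x + e u\<close>, for a suitable \<open>e \<ge> 0\<close>, would stay in that spindle while leaving the
  supporting half-space \<open>{p. u \<bullet> (p - x) \<le> 0}\<close>. The other two claims come from
  \<open>K\<^sup>c \<subseteq> B(x, 1)\<close>: the point \<open>x - u\<close> of \<open>K\<^sup>c\<close> lies on the sphere \<open>\<partial>B(x, 1)\<close>, where
  \<open>-u\<close> is the outer normal of \<open>B(x, 1)\<close>.\<close>

lemma mem_bcomp: "z \<in> bcomp A \<longleftrightarrow> (\<forall>a\<in>A. dist a z \<le> 1)"
  by (simp add: bcomp_def)

lemma mem_bcomp_iff_subset_cball: "c \<in> bcomp K \<longleftrightarrow> K \<subseteq> cball c 1"
  by (auto simp: mem_bcomp dist_commute)

lemma closed_bcomp: "closed (bcomp A)"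
  by (simp add: bcomp_def closed_INT)

lemma bcomp_antimono: "A \<subseteq> B \<Longrightarrow> bcomp B \<subseteq> bcomp A"
  unfolding bcomp_def by blast

lemma subset_bcomp_bcomp: "A \<subseteq> bcomp (bcomp A)"
  by (auto simp: mem_bcomp) (metis dist_commute)

lemma S_class_bcomp_bcomp:
  assumes "K \<in> S_class"
  shows "bcomp (bcomp K) = K"
proof -
  obtain A where "K = bcomp A"
    using assms by (auto simp: S_class_def)
  then show ?thesis
    by (metis bcomp_antimono subset_bcomp_bcomp subset_antisym)
qed

lemma S_class_spindle_convex:
  assumes "K \<in> S_class" and "x \<in> K" and "w \<in> K"
  shows "bcomp (bcomp {x, w}) \<subseteq> K"
  using bcomp_antimono[OF bcomp_antimono, of "{x, w}" K] assms S_class_bcomp_bcomp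
  by auto

lemma perturbed_step_in_cball:
  fixes a x w f :: "'a::real_inner"
  assumes x: "x \<in> cball a 1" and w: "w \<in> cball a 1" and f: "norm f \<le> e"
    and "0 \<le> t" "t \<le> 1"
    and step: "t * ((w - x + f) \<bullet> (w - x + f)) \<le> (w - x) \<bullet> (w - x) - 2 * e"
  shows "x + t *\<^sub>R (w - x + f) \<in> cball a 1"
proof -
  define y d v where "y = a - x" and "d = w - x" and "v = w - x + f"
  have ny: "norm y \<le> 1"
    using x by (simp add: y_def dist_norm)
  then have y: "y \<bullet> y \<le> 1"
    by (simp add: norm_le_square)
  have "norm (d - y) \<le> 1"
    using w by (simp add: d_def y_def dist_norm norm_minus_commute)
  then have "(d - y) \<bullet> (d - y) \<le> 1"
    by (simp add: norm_le_square)
  then have dy: "d \<bullet> d + y \<bullet> y - 1 \<le> 2 * (d \<bullet> y)"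
    by (simp add: inner_diff_left inner_diff_right inner_commute)
  have "- (f \<bullet> y) \<le> norm f * norm y"
    using Cauchy_Schwarz_ineq2[of f y] by simp
  also have "\<dots> \<le> e"
    using mult_mono[OF f ny] order_trans[OF norm_ge_zero f] by simp
  finally have fy: "- (f \<bullet> y) \<le> e" .
  have "(y - t *\<^sub>R v) \<bullet> (y - t *\<^sub>R v) = y \<bullet> y - 2 * t * (d \<bullet> y + f \<bullet> y) + t * (t * (v \<bullet> v))"
    by (simp add: v_def d_def inner_diff_left inner_diff_right inner_add_left inner_commute algebra_simps)
  also have "\<dots> \<le> y \<bullet> y - t * (d \<bullet> d + y \<bullet> y - 1) + 2 * t * e + t * (d \<bullet> d - 2 * e)"
  proof -
    have "t * (d \<bullet> d + y \<bullet> y - 1) \<le> t * (2 * (d \<bullet> y))"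
      using dy \<open>0 \<le> t\<close> by (rule mult_left_mono)
    moreover have "t * - (f \<bullet> y) \<le> t * e"
      using fy \<open>0 \<le> t\<close> by (rule mult_left_mono)
    moreover have "t * (t * (v \<bullet> v)) \<le> t * (d \<bullet> d - 2 * e)"
      using step \<open>0 \<le> t\<close> unfolding v_def d_def by (rule mult_left_mono)
    ultimately show ?thesis
      by (simp add: algebra_simps)
  qed
  also have "\<dots> = (1 - t) * (y \<bullet> y) + t"
    by (simp add: algebra_simps)
  also have "\<dots> \<le> 1"
    using mult_left_mono[OF y, of "1 - t"] \<open>t \<le> 1\<close> by simp
  finally show ?thesis
    by (simp add: y_def v_def dist_norm norm_le_square algebra_simps)
qed

lemma spindle_point_beyond_halfspace:
  fixes x w u :: "'a::euclidean_space"
  assumes u: "norm u = 1" and far: "dist w (x - u) > 1"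
  obtains p where "p \<in> bcomp (bcomp {x, w})" and "u \<bullet> (p - x) > 0"
proof (cases "u \<bullet> (w - x) > 0")
  case True
  then show ?thesis
    using subset_bcomp_bcomp that by blast
next
  case False
  define d where "d = w - x"
  have uu: "u \<bullet> u = 1"
    using u by (simp add: norm_eq_1)
  have "\<not> norm (d + u) \<le> 1"
    using far by (simp add: d_def dist_norm algebra_simps)
  then have "1 < (d + u) \<bullet> (d + u)"
    by (simp add: norm_le_square)
  then have far': "0 < d \<bullet> d + 2 * (u \<bullet> d)"
    by (simp add: inner_add_left inner_add_right inner_commute uu)
  \<comment> \<open>This \<open>e\<close> makes both \<open>u \<bullet> v\<close> and \<open>d \<bullet> d - 2 e\<close> positive multiples of \<open>|d + u|\<^sup>2 - 1\<close>.\<close>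
  define e where "e = (d \<bullet> d - 2 * (u \<bullet> d)) / 4"
  define v where "v = d + e *\<^sub>R u"
  have "u \<bullet> d \<le> 0"
    using False by (simp add: d_def)
  then have "0 \<le> e"
    unfolding e_def by (simp add: order_trans[OF _ inner_ge_zero])
  have "u \<bullet> v = (d \<bullet> d + 2 * (u \<bullet> d)) / 4"
    by (simp add: v_def e_def inner_add_right uu field_simps)
  then have uv: "0 < u \<bullet> v"
    using far' by simp
  then have "0 < v \<bullet> v"
    by (metis inner_zero_right inner_gt_zero_iff order_less_irrefl)
  define t where "t = min 1 ((d \<bullet> d - 2 * e) / (v \<bullet> v))"
  have "0 < d \<bullet> d - 2 * e"
    using far' by (simp add: e_def)
  then have "0 < t" and "t \<le> 1"
    using \<open>0 < v \<bullet> v\<close> by (simp_all add: t_def)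
  have "t * (v \<bullet> v) \<le> d \<bullet> d - 2 * e"
    using \<open>0 < v \<bullet> v\<close> by (simp add: t_def min_def pos_le_divide_eq split: if_splits)
  have "x + t *\<^sub>R v \<in> bcomp (bcomp {x, w})"
    unfolding mem_bcomp[of _ "bcomp {x, w}"]
  proof
    fix a
    assume "a \<in> bcomp {x, w}"
    then have "x \<in> cball a 1" and "w \<in> cball a 1"
      by (simp_all add: mem_bcomp dist_commute)
    then have "x + t *\<^sub>R (w - x + e *\<^sub>R u) \<in> cball a 1"
      using \<open>0 \<le> e\<close> \<open>0 < t\<close> \<open>t \<le> 1\<close> \<open>t * (v \<bullet> v) \<le> d \<bullet> d - 2 * e\<close> u
      by (intro perturbed_step_in_cball) (simp_all add: v_def d_def)
    then show "dist a (x + t *\<^sub>R v) \<le> 1"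
      by (simp add: v_def d_def)
  qed
  moreover have "0 < u \<bullet> (x + t *\<^sub>R v - x)"
    using \<open>0 < t\<close> uv by simp
  ultimately show ?thesis
    using that by blast
qed

lemma S_class_subset_cball_normal:
  assumes K: "K \<in> S_class" and x: "x \<in> K" and u: "u \<in> unit_normals K x"
  shows "K \<subseteq> cball (x - u) 1"
proof
  fix w
  assume w: "w \<in> K"
  show "w \<in> cball (x - u) 1"
  proof (rule ccontr)
    assume "w \<notin> cball (x - u) 1"
    moreover have "norm u = 1"
      using u by (simp add: unit_normals_def)
    ultimately obtain p where p: "p \<in> bcomp (bcomp {x, w})" and "u \<bullet> (p - x) > 0"
      using spindle_point_beyond_halfspace by (metis dist_commute mem_cball not_le)
    moreover have "p \<in> K"
      using S_class_spindle_convex[OF K x w] p by blast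
    ultimately show False
      using u by (auto simp: unit_normals_def not_le[symmetric])
  qed
qed

lemma frontier_if_subset_cball_sphere:
  fixes z :: "'a::{real_normed_vector, perfect_space}"
  assumes "z \<in> S" and "S \<subseteq> cball x r" and "dist x z = r"
  shows "z \<in> frontier S"
proof -
  have "interior S \<subseteq> ball x r"
    using interior_mono[OF assms(2)] by simp
  then show ?thesis
    using assms closure_subset by (fastforce simp: frontier_def)
qed

lemma unit_normals_antimono: "S \<subseteq> T \<Longrightarrow> unit_normals T z \<subseteq> unit_normals S z"
  by (auto simp: unit_normals_def)

lemma unit_normal_cball:
  fixes x u :: "'a::euclidean_space"
  assumes "norm u = 1"
  shows "- u \<in> unit_normals (cball x 1) (x - u)"
proof -
  have "0 \<le> u \<bullet> q" if "x - u + q \<in> cball x 1" for q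
  proof -
    have "norm (u - q) \<le> 1"
      using that by (simp add: dist_norm algebra_simps)
    then have "(u - q) \<bullet> (u - q) \<le> u \<bullet> u"
      using assms by (simp add: norm_le_square norm_eq_1)
    then have "q \<bullet> q \<le> 2 * (u \<bullet> q)"
      by (simp add: inner_diff_left inner_diff_right inner_commute)
    then show ?thesis
      using inner_ge_zero[of q] by linarith
  qed
  then have "0 \<le> u \<bullet> (z - (x - u))" if "z \<in> cball x 1" for z
    using that by (metis add.commute diff_add_cancel)
  then show ?thesis
    using assms by (simp add: unit_normals_def)
qed

theorem lemma1p24:
  fixes K :: "'a::euclidean_space set" and x u :: 'a
  assumes "K \<in> S_class"
    and "x \<in> frontier K"
    and "u \<in> unit_normals K x"
  shows "K \<subseteq> cball (x - u) 1 \<and> x - u \<in> frontier (bcomp K)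
         \<and> - u \<in> unit_normals (bcomp K) (x - u)"
proof (intro conjI)
  have "closed K"
    using assms(1) closed_bcomp by (auto simp: S_class_def)
  then have xK: "x \<in> K"
    using assms(2) frontier_subset_closed by blast
  have u: "norm u = 1"
    using assms(3) by (simp add: unit_normals_def)
  show K: "K \<subseteq> cball (x - u) 1"
    using S_class_subset_cball_normal assms(1,3) xK by blast
  have bcomp_K: "bcomp K \<subseteq> cball x 1"
    using xK by (auto simp: mem_bcomp)
  show "x - u \<in> frontier (bcomp K)"
    using K u by (intro frontier_if_subset_cball_sphere[OF _ bcomp_K])
      (simp_all add: mem_bcomp_iff_subset_cball dist_norm)
  show "- u \<in> unit_normals (bcomp K) (x - u)"
    using unit_normals_antimono[OF bcomp_K] unit_normal_cball[OF u] by blast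
qed

end
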